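(* Let $p=\tfrac12$. Then $K_\infty\phi=2\phi$. Consequently $\mu_n=\langle\phi,K_\infty^n\phi\rangle=2^n$ for all $n\ge0$, and the rooted spectral measure $\nu_\phi$ (the unique finite positive Borel measure with $\langle\phi,f(K_\infty)\phi\rangle=\int f\,d\nu_\phi$ for bounded Borel $f$) is $\nu_\phi=\delta_2$.
   Context: Let $S_0(x)=x/3$, $S_2(x)=(x+2)/3$ on $[0,1]$ and let $C$ be the middle-third Cantor set. $\mu=\mu_{1/2}$ is the unique Borel probability measure on $[0,1]$ with $\mu=\frac12\mu\circ S_0^{-1}+\frac12\mu\circ S_2^{-1}$. For words $w\in\{0,2\}^n$, $S_w=S_{w_1}\circ\cdots\circ S_{w_n}$, $C_w=S_w(C)$. Inner product $\langle f,g\rangle=\int\overline fg\,d\mu$; $\phi=1_C$. $K_mf=\sum_{|u|\le m}\langle1_{C_u},f\rangle1_{C_u}$ and $K_\infty=\lim_{m\to\infty}K_m$ in operator norm on $L^2(\mu)$ (this limit exists and is compact, positive, self-adjoint). *)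

theory Defs
  imports "HOL-Probability.Probability"
begin

definition S :: "nat \<Rightarrow> real \<Rightarrow> real" where
  "S d x = (x + real d) / 3"

fun Sw :: "nat list \<Rightarrow> real \<Rightarrow> real" where
  "Sw [] = id"
| "Sw (d # w) = S d \<circ> Sw w"

definition words :: "nat list set" where
  "words = {w. set w \<subseteq> {0, 2}}"

definition words_upto :: "nat \<Rightarrow> nat list set" where
  "words_upto m = {w \<in> words. length w \<le> m}"

definition cantor :: "real set" where
  "cantor = (\<Inter>n. \<Union>{Sw w ` {0..1} | w. w \<in> words \<and> length w = n})"

definition Cw :: "nat list \<Rightarrow> real set" where
  "Cw w = Sw w ` cantor"

definition phi :: "real \<Rightarrow> complex" where
  "phi = indicator cantor"

definition cantor_measure :: "real measure \<Rightarrow> bool" where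
  "cantor_measure M \<longleftrightarrow> prob_space M \<and> sets M = sets borel \<and> emeasure M {0..1} = 1 \<and>
     (\<forall>A \<in> sets borel. emeasure M A =
        ennreal (1/2) * emeasure M (S 0 -` A) + ennreal (1/2) * emeasure M (S 2 -` A))"

definition sqint :: "real measure \<Rightarrow> (real \<Rightarrow> complex) \<Rightarrow> bool" where
  "sqint M f \<longleftrightarrow> f \<in> borel_measurable M \<and> integrable M (\<lambda>x. (cmod (f x))\<^sup>2)"

definition l2norm :: "real measure \<Rightarrow> (real \<Rightarrow> complex) \<Rightarrow> real" where
  "l2norm M f = sqrt (\<integral>x. (cmod (f x))\<^sup>2 \<partial>M)"

definition ip :: "real measure \<Rightarrow> (real \<Rightarrow> complex) \<Rightarrow> (real \<Rightarrow> complex) \<Rightarrow> complex" where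
  "ip M f g = (\<integral>x. cnj (f x) * g x \<partial>M)"

definition Kop :: "real measure \<Rightarrow> nat \<Rightarrow> (real \<Rightarrow> complex) \<Rightarrow> (real \<Rightarrow> complex)" where
  "Kop M m f = (\<lambda>x. \<Sum>u\<in>words_upto m. ip M (indicator (Cw u)) f * indicator (Cw u) x)"

definition is_Kinf :: "real measure \<Rightarrow> ((real \<Rightarrow> complex) \<Rightarrow> (real \<Rightarrow> complex)) \<Rightarrow> bool" where
  "is_Kinf M K \<longleftrightarrow> (\<forall>f. sqint M f \<longrightarrow> sqint M (K f)) \<and>
     (\<forall>e>0. \<exists>N. \<forall>m\<ge>N. \<forall>f. sqint M f \<longrightarrow>
        l2norm M (\<lambda>x. Kop M m f x - K f x) \<le> e * l2norm M f)"

text \<open>For a compact self-adjoint K the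
  eigenvectors span a dense subspace (spectral theorem), so this determines f(K).\<close>
definition is_fcalc :: "real measure \<Rightarrow> ((real \<Rightarrow> complex) \<Rightarrow> (real \<Rightarrow> complex))
    \<Rightarrow> (real \<Rightarrow> complex) \<Rightarrow> ((real \<Rightarrow> complex) \<Rightarrow> (real \<Rightarrow> complex)) \<Rightarrow> bool" where
  "is_fcalc M K f T \<longleftrightarrow>
     (\<forall>g. sqint M g \<longrightarrow> sqint M (T g)) \<and>
     (\<exists>c. \<forall>g. sqint M g \<longrightarrow> l2norm M (T g) \<le> c * l2norm M g) \<and>
     (\<forall>g h. sqint M g \<longrightarrow> sqint M h \<longrightarrow>
        (AE x in M. T (\<lambda>y. g y + h y) x = T g x + T h x)) \<and>
     (\<forall>a g. sqint M g \<longrightarrow> (AE x in M. T (\<lambda>y. a * g y) x = a * T g x)) \<and>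
     (\<forall>(lam::real) g. sqint M g \<longrightarrow> (AE x in M. K g x = complex_of_real lam * g x) \<longrightarrow>
        (AE x in M. T g x = f lam * g x))"

definition is_spectral_measure :: "real measure \<Rightarrow> ((real \<Rightarrow> complex) \<Rightarrow> (real \<Rightarrow> complex))
    \<Rightarrow> (real \<Rightarrow> complex) \<Rightarrow> real measure \<Rightarrow> bool" where
  "is_spectral_measure M K v nu \<longleftrightarrow> sets nu = sets borel \<and> finite_measure nu \<and>
     (\<forall>f T. f \<in> borel_measurable borel \<and> bounded (range f) \<and> is_fcalc M K f T \<longrightarrow>
        ip M v (T v) = (\<integral>t. f t \<partial>nu))"

end

theory Submission
  imports Defs
begin

text \<open>
  \<open>K\<^sub>m \<phi>\<close> can be computed exactly: by self-similarity \<open>\<langle>1_C\<^sub>u, \<phi>\<rangle> = \<mu>(C\<^sub>u) = 2^-|u|\<close>,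
  and the \<open>2^n\<close> disjoint cylinders \<open>C\<^sub>u\<close> with \<open>|u| = n\<close> exhaust \<open>C\<close> up to a null set, so
  \<open>K\<^sub>m \<phi> = (1 + 1/2 + ... + 2^-m) \<phi> = (2 - 2^-m) \<phi>\<close> almost everywhere. Passing to the
  operator-norm limit, \<open>\<phi>\<close> is a unit eigenvector of \<open>K\<^sub>\<infinity>\<close> with eigenvalue 2, which gives the
  moments. Every \<open>f(K\<^sub>\<infinity>)\<close> maps \<open>\<phi>\<close> to \<open>f(2) \<phi>\<close>, so \<open>\<delta>\<^sub>2\<close> is a spectral measure.
  Conversely, testing a spectral measure \<open>\<nu>\<close> against \<open>f = 1\<close> and against \<open>f(t) = (t - 2)\<^sup>2\<close>
  (truncated outside a bound for the eigenvalues, and realised by the operator \<open>(K\<^sub>\<infinity> - 2)\<^sup>2\<close>)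
  shows that \<open>\<nu>\<close> is a probability measure with \<open>\<integral>(t - 2)\<^sup>2 d\<nu> = \<langle>\<phi>, (K\<^sub>\<infinity> - 2)\<^sup>2 \<phi>\<rangle> = 0\<close>,
  that is, \<open>\<nu> = \<delta>\<^sub>2\<close>.
\<close>

section \<open>The middle-third Cantor set\<close>

lemma S_atLeastAtMost: "d \<le> 2 \<Longrightarrow> x \<in> {0..1} \<Longrightarrow> S d x \<in> {0..1}"
  by (auto simp: S_def)

lemma Sw_atLeastAtMost: "w \<in> words \<Longrightarrow> x \<in> {0..1} \<Longrightarrow> Sw w x \<in> {0..1}"
  by (induction w) (auto simp: words_def S_def)

lemma continuous_on_Sw: "continuous_on A (Sw w)"
proof (induction w)
  case (Cons d w)
  have "continuous_on A (\<lambda>x. (Sw w x + real d) / 3)"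
    by (intro continuous_intros Cons.IH) simp
  then show ?case
    by (simp add: S_def comp_def)
qed simp

lemma inj_S: "inj (S d)"
  by (auto simp: inj_def S_def)

lemma S_images_disjoint: "d \<in> {0, 2} \<Longrightarrow> e \<in> {0, 2} \<Longrightarrow> d \<noteq> e \<Longrightarrow> S d ` {0..1} \<inter> S e ` {0..1} = {}"
  by (auto simp: S_def)

lemma Sw_images_disjoint:
  assumes "u \<in> words" "v \<in> words" "length u = length v" "u \<noteq> v"
  shows "Sw u ` {0..1} \<inter> Sw v ` {0..1} = {}"
  using assms
proof (induction u arbitrary: v)
  case (Cons d u)
  then obtain e v' where v: "v = e # v'" "v' \<in> words" "length u = length v'"
    by (cases v) (auto simp: words_def)
  have d: "d \<in> {0, 2}" "u \<in> words" and e: "e \<in> {0, 2}"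
    using Cons.prems v by (auto simp: words_def)
  have image_Cons: "Sw (a # w) ` {0..1} = S a ` Sw w ` {0..1}" for a w
    by (simp add: image_comp)
  show ?case
  proof (cases "d = e")
    case True
    then have "Sw u ` {0..1} \<inter> Sw v' ` {0..1} = {}"
      using Cons.IH[of v'] Cons.prems v d by auto
    then have "S d ` Sw u ` {0..1} \<inter> S d ` Sw v' ` {0..1} = {}"
      by (simp flip: image_Int[OF inj_S])
    then show ?thesis
      using True v by (simp only: image_Cons)
  next
    case False
    have "Sw w ` {0..1} \<subseteq> {0..1}" if "w \<in> words" for w
      using Sw_atLeastAtMost[OF that] by auto
    then have "S d ` Sw u ` {0..1} \<subseteq> S d ` {0..1}" "S e ` Sw v' ` {0..1} \<subseteq> S e ` {0..1}"
      using d(2) v(2) by (simp_all add: image_mono)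
    then have "Sw (d # u) ` {0..1} \<inter> Sw v ` {0..1} \<subseteq> S d ` {0..1} \<inter> S e ` {0..1}"
      unfolding image_Cons v(1) by (rule Int_mono)
    then show ?thesis
      using S_images_disjoint[OF d(1) e False] by blast
  qed
qed simp

definition words_of_length :: "nat \<Rightarrow> nat list set" where
  "words_of_length n = {w \<in> words. length w = n}"

lemma finite_words_of_length: "finite (words_of_length n)"
  using finite_lists_length_eq[of "{0::nat, 2}" n] by (simp add: words_of_length_def words_def)

lemma card_words_of_length: "card (words_of_length n) = 2 ^ n"
  using card_lists_length_eq[of "{0::nat, 2}" n]
  by (simp add: words_of_length_def words_def numeral_2_eq_2)

lemma words_upto_eq_UN: "words_upto m = (\<Union>n\<le>m. words_of_length n)"
  by (auto simp: words_upto_def words_of_length_def)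

definition cantor_level :: "nat \<Rightarrow> real set" where
  "cantor_level n = (\<Union>w\<in>words_of_length n. Sw w ` {0..1})"

lemma cantor_eq_INT_cantor_level: "cantor = (\<Inter>n. cantor_level n)"
  by (simp add: cantor_def cantor_level_def words_of_length_def setcompr_eq_image)

lemma cantor_level_0: "cantor_level 0 = {0..1}"
  by (simp add: cantor_level_def words_of_length_def words_def)

lemma cantor_subset_atLeastAtMost: "cantor \<subseteq> {0..1}"
  using cantor_eq_INT_cantor_level cantor_level_0 by auto

lemma closed_cantor_level: "closed (cantor_level n)"
  unfolding cantor_level_def
  by (intro closed_Union finite_imageI finite_words_of_length)
    (auto intro!: compact_imp_closed compact_continuous_image continuous_on_Sw)

lemma compact_cantor: "compact cantor"
  unfolding compact_eq_bounded_closed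
proof
  show "bounded cantor"
    using cantor_subset_atLeastAtMost bounded_subset[of "{0..1::real}"] by auto
  show "closed cantor"
    by (simp add: cantor_eq_INT_cantor_level closed_INT closed_cantor_level)
qed

lemma S_cantor_level:
  assumes d: "d \<in> {0, 2}" and x: "x \<in> cantor_level n"
  shows "S d x \<in> cantor_level (Suc n)"
proof -
  obtain w y where w: "w \<in> words_of_length n" "y \<in> {0..1}" "x = Sw w y"
    using x unfolding cantor_level_def by blast
  then have "d # w \<in> words_of_length (Suc n)" "S d x = Sw (d # w) y"
    using d by (auto simp: words_of_length_def words_def)
  then show ?thesis
    using w(2) unfolding cantor_level_def by blast
qed

lemma S_cantor:
  assumes d: "d \<in> {0, 2}" and x: "x \<in> cantor"
  shows "S d x \<in> cantor"
proof -
  have "S d x \<in> cantor_level n" for n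
  proof (cases n)
    case 0
    then show ?thesis
      using x d cantor_subset_atLeastAtMost S_atLeastAtMost cantor_level_0 by auto
  next
    case (Suc k)
    then show ?thesis
      using S_cantor_level[OF d] x unfolding cantor_eq_INT_cantor_level by blast
  qed
  then show ?thesis
    by (simp add: cantor_eq_INT_cantor_level)
qed

lemma Cw_Cons: "Cw (d # u) = S d ` Cw u"
  by (simp add: Cw_def image_comp)

lemma Cw_subset_cantor: "u \<in> words \<Longrightarrow> Cw u \<subseteq> cantor"
  by (induction u) (auto simp: Cw_def words_def S_cantor)

lemma Cw_subset_Sw_image: "Cw u \<subseteq> Sw u ` {0..1}"
  unfolding Cw_def using cantor_subset_atLeastAtMost by (rule image_mono)

lemma disjoint_family_on_Cw: "disjoint_family_on Cw (words_of_length n)"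
  unfolding disjoint_family_on_def
proof (intro ballI impI)
  fix u v assume "u \<in> words_of_length n" "v \<in> words_of_length n" "u \<noteq> v"
  then have "Sw u ` {0..1} \<inter> Sw v ` {0..1} = {}"
    by (intro Sw_images_disjoint) (auto simp: words_of_length_def)
  then show "Cw u \<inter> Cw v = {}"
    using Cw_subset_Sw_image[of u] Cw_subset_Sw_image[of v] by blast
qed

lemma compact_Cw: "compact (Cw u)"
  unfolding Cw_def by (intro compact_continuous_image continuous_on_Sw compact_cantor)

lemma Cw_in_borel [measurable]: "Cw u \<in> sets borel"
  by (simp add: borel_closed compact_imp_closed compact_Cw)

lemma cantor_in_borel [measurable]: "cantor \<in> sets borel"
  by (simp add: borel_closed compact_imp_closed compact_cantor)

lemma cantor_level_in_borel [measurable]: "cantor_level n \<in> sets borel"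
  by (simp add: borel_closed closed_cantor_level)

lemma S_measurable [measurable]: "S d \<in> borel_measurable borel"
  unfolding S_def by measurable

definition cylinders :: "nat \<Rightarrow> real set" where
  "cylinders n = (\<Union>u\<in>words_of_length n. Cw u)"

lemma indicator_cylinders: "indicator (cylinders n) x = (\<Sum>u\<in>words_of_length n. indicator (Cw u) x)"
  unfolding cylinders_def by (rule indicator_UN_disjoint[OF finite_words_of_length disjoint_family_on_Cw])

section \<open>The self-similar measure\<close>

locale cantor_measure_space =
  fixes M :: "real measure"
  assumes cantor_measure: "cantor_measure M"
begin

sublocale prob_space M
  using cantor_measure by (simp add: cantor_measure_def)

lemma sets_M [measurable_cong]: "sets M = sets borel"
  using cantor_measure by (simp add: cantor_measure_def)

lemma space_M [simp]: "space M = UNIV"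
  using sets_eq_imp_space_eq[OF sets_M] by simp

lemma vimage_S_in_sets: "A \<in> sets borel \<Longrightarrow> S d -` A \<in> sets M"
  using measurable_sets_borel[OF S_measurable] by (simp add: sets_M)

lemma measure_self_similar:
  assumes "A \<in> sets borel"
  shows "measure M A = measure M (S 0 -` A) / 2 + measure M (S 2 -` A) / 2"
proof -
  have half: "ennreal (1/2) * ennreal (measure M B) = ennreal (measure M B / 2)" for B
    by (rule ennreal_mult'[symmetric, THEN trans]) auto
  have "emeasure M A = ennreal (1/2) * emeasure M (S 0 -` A) + ennreal (1/2) * emeasure M (S 2 -` A)"
    using cantor_measure assms unfolding cantor_measure_def by blast
  then have "ennreal (measure M A) = ennreal (measure M (S 0 -` A) / 2) + ennreal (measure M (S 2 -` A) / 2)"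
    unfolding emeasure_eq_measure half .
  also have "\<dots> = ennreal (measure M (S 0 -` A) / 2 + measure M (S 2 -` A) / 2)"
    by (rule ennreal_plus[symmetric]) simp_all
  finally show ?thesis
    by (subst (asm) ennreal_inj) simp_all
qed

lemma measure_disjoint_unit_interval:
  assumes "B \<in> sets borel" "B \<inter> {0..1} = {}"
  shows "measure M B = 0"
proof -
  have "measure M {0..1} = 1"
    using cantor_measure by (simp add: cantor_measure_def emeasure_eq_measure)
  then have "measure M (- {0..1}) = 0"
    using prob_compl[of "{0..1}"] by (simp add: Compl_eq_Diff_UNIV)
  moreover have "measure M B \<le> measure M (- {0..1})"
    using assms by (intro finite_measure_mono) auto
  ultimately show ?thesis
    using measure_nonneg[of M B] by linarith
qed

lemma measure_cantor_level: "measure M (cantor_level n) = 1"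
proof (induction n)
  case 0
  then show ?case
    using cantor_measure by (simp add: cantor_level_0 cantor_measure_def emeasure_eq_measure)
next
  case (Suc n)
  have "measure M (S d -` cantor_level (Suc n)) = 1" if "d \<in> {0, 2}" for d
  proof (rule antisym)
    have "cantor_level n \<subseteq> S d -` cantor_level (Suc n)"
      using S_cantor_level[OF that] by auto
    then show "1 \<le> measure M (S d -` cantor_level (Suc n))"
      using Suc.IH finite_measure_mono[of "cantor_level n"] by (simp add: vimage_S_in_sets)
  qed (rule prob_le_1)
  then show ?case
    using measure_self_similar[of "cantor_level (Suc n)"] by simp
qed

lemma AE_in_cantor: "AE x in M. x \<in> cantor"
proof -
  have "AE x in M. \<forall>n. x \<in> cantor_level n"
    by (simp add: AE_all_countable AE_prob_1 measure_cantor_level)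
  then show ?thesis
    by (simp add: cantor_eq_INT_cantor_level)
qed

lemma measure_cantor: "measure M cantor = 1"
  using AE_in_set_eq_1[of cantor] AE_in_cantor by simp

lemma measure_vimage_S_Cw:
  assumes "d \<in> {0, 2}" "e \<in> {0, 2}" "u \<in> words"
  shows "measure M (S e -` Cw (d # u)) = (if e = d then measure M (Cw u) else 0)"
proof (cases "e = d")
  case True
  then show ?thesis
    by (simp add: Cw_Cons inj_vimage_image_eq[OF inj_S])
next
  case False
  have "S e -` Cw (d # u) \<inter> {0..1} = {}"
  proof -
    have "S d ` Cw u \<subseteq> S d ` {0..1}"
      using Cw_subset_cantor[OF assms(3)] cantor_subset_atLeastAtMost by (intro image_mono) auto
    then show ?thesis
      using S_images_disjoint[OF assms(1,2)] False by (auto simp: Cw_Cons)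
  qed
  then show ?thesis
    using False vimage_S_in_sets[of "Cw (d # u)" e]
    by (simp add: measure_disjoint_unit_interval sets_M)
qed

lemma measure_Cw: "u \<in> words \<Longrightarrow> measure M (Cw u) = (1/2) ^ length u"
proof (induction u)
  case Nil
  then show ?case
    by (simp add: Cw_def measure_cantor)
next
  case (Cons d u)
  then have d: "d \<in> {0, 2}" and u: "u \<in> words"
    by (auto simp: words_def)
  have "measure M (Cw (d # u)) = measure M (Cw u) / 2"
    using measure_self_similar[of "Cw (d # u)"] measure_vimage_S_Cw[OF d _ u] d by auto
  then show ?case
    using Cons.IH[OF u] by simp
qed

lemma measure_cylinders: "measure M (cylinders n) = 1"
proof -
  have "measure M (cylinders n) = (\<Sum>u\<in>words_of_length n. measure M (Cw u))"
    unfolding cylinders_def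
    by (intro measure_finite_Union finite_words_of_length disjoint_family_on_Cw) auto
  also have "\<dots> = (\<Sum>u\<in>words_of_length n. (1/2) ^ n)"
    by (intro sum.cong) (auto simp: words_of_length_def measure_Cw)
  also have "\<dots> = 1"
    by (simp add: card_words_of_length flip: power_mult_distrib)
  finally show ?thesis .
qed

lemma AE_in_cylinders: "AE x in M. x \<in> cylinders n"
  by (rule AE_prob_1) (rule measure_cylinders)

end

section \<open>Square-integrable functions\<close>

lemma borel_measurable_cnj [measurable]:
  "f \<in> borel_measurable M \<Longrightarrow> (\<lambda>x. cnj (f x)) \<in> borel_measurable M"
  by (rule borel_measurable_continuous_on[of cnj]) (auto intro: continuous_on_cnj continuous_on_id)

definition l2norm_sq :: "real measure \<Rightarrow> (real \<Rightarrow> complex) \<Rightarrow> real" where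
  "l2norm_sq M f = (\<integral>x. (cmod (f x))\<^sup>2 \<partial>M)"

lemma l2norm_eq_sqrt: "l2norm M f = sqrt (l2norm_sq M f)"
  by (simp add: l2norm_def l2norm_sq_def)

lemma l2norm_sq_nonneg: "0 \<le> l2norm_sq M f"
  unfolding l2norm_sq_def by (rule integral_nonneg_AE) simp

lemma l2norm_sq_cmult: "l2norm_sq M (\<lambda>x. c * f x) = (cmod c)\<^sup>2 * l2norm_sq M f"
  unfolding l2norm_sq_def by (simp add: norm_mult power_mult_distrib)

lemma l2norm_sq_minus_commute: "l2norm_sq M (\<lambda>x. f x - g x) = l2norm_sq M (\<lambda>x. g x - f x)"
  unfolding l2norm_sq_def by (simp add: norm_minus_commute)

lemma l2norm_sq_cong_AE:
  assumes "f \<in> borel_measurable M" "g \<in> borel_measurable M" "AE x in M. f x = g x"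
  shows "l2norm_sq M f = l2norm_sq M g"
  unfolding l2norm_sq_def using assms by (intro integral_cong_AE) auto

lemma l2norm_le_iff_l2norm_sq_le:
  assumes "0 \<le> c"
  shows "l2norm M f \<le> c * l2norm M g \<longleftrightarrow> l2norm_sq M f \<le> c\<^sup>2 * l2norm_sq M g"
proof -
  have "c * l2norm M g = sqrt (c\<^sup>2 * l2norm_sq M g)"
    using assms by (simp add: l2norm_eq_sqrt real_sqrt_mult)
  then show ?thesis
    by (simp add: l2norm_eq_sqrt)
qed

lemma cmod_add_squared_le: "(cmod (a + b))\<^sup>2 \<le> 2 * (cmod a)\<^sup>2 + 2 * (cmod b)\<^sup>2"
proof -
  have "(cmod (a + b))\<^sup>2 \<le> (cmod a + cmod b)\<^sup>2"
    by (intro power_mono norm_triangle_ineq) simp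
  also have "\<dots> \<le> 2 * (cmod a)\<^sup>2 + 2 * (cmod b)\<^sup>2"
    using sum_squares_ge_zero[of "cmod a - cmod b" 0] by (simp add: power2_eq_square algebra_simps)
  finally show ?thesis .
qed

lemma sqint_measurable: "sqint M f \<Longrightarrow> f \<in> borel_measurable M"
  by (simp add: sqint_def)

lemma sqint_integrable_square: "sqint M f \<Longrightarrow> integrable M (\<lambda>x. (cmod (f x))\<^sup>2)"
  by (simp add: sqint_def)

lemma sqint_add:
  assumes f: "sqint M f" and g: "sqint M g"
  shows "sqint M (\<lambda>x. f x + g x)"
proof -
  have [measurable]: "f \<in> borel_measurable M" "g \<in> borel_measurable M"
    using f g by (simp_all add: sqint_def)
  have "integrable M (\<lambda>x. 2 * (cmod (f x))\<^sup>2 + 2 * (cmod (g x))\<^sup>2)"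
    using sqint_integrable_square[OF f] sqint_integrable_square[OF g] by simp
  then have "integrable M (\<lambda>x. (cmod (f x + g x))\<^sup>2)"
    by (rule Bochner_Integration.integrable_bound)
      (auto intro!: AE_I2 simp: order_trans[OF cmod_add_squared_le])
  then show ?thesis
    by (simp add: sqint_def)
qed

lemma sqint_cmult:
  assumes "sqint M f"
  shows "sqint M (\<lambda>x. c * f x)"
proof -
  have [measurable]: "f \<in> borel_measurable M"
    using assms by (simp add: sqint_def)
  have "integrable M (\<lambda>x. (cmod c)\<^sup>2 * (cmod (f x))\<^sup>2)"
    using sqint_integrable_square[OF assms] by simp
  then show ?thesis
    by (simp add: sqint_def norm_mult power_mult_distrib)
qed

lemma sqint_diff: "sqint M f \<Longrightarrow> sqint M g \<Longrightarrow> sqint M (\<lambda>x. f x - g x)"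
  using sqint_add[OF _ sqint_cmult, of M f g "-1"] by simp

lemma l2norm_sq_add_le:
  assumes f: "sqint M f" and g: "sqint M g"
  shows "l2norm_sq M (\<lambda>x. f x + g x) \<le> 2 * l2norm_sq M f + 2 * l2norm_sq M g"
proof -
  have "l2norm_sq M (\<lambda>x. f x + g x) \<le> (\<integral>x. 2 * (cmod (f x))\<^sup>2 + 2 * (cmod (g x))\<^sup>2 \<partial>M)"
    unfolding l2norm_sq_def
    using sqint_integrable_square[OF sqint_add[OF f g]] sqint_integrable_square[OF f]
      sqint_integrable_square[OF g]
    by (intro integral_mono) (auto simp: cmod_add_squared_le)
  also have "\<dots> = 2 * l2norm_sq M f + 2 * l2norm_sq M g"
    using sqint_integrable_square[OF f] sqint_integrable_square[OF g] by (simp add: l2norm_sq_def)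
  finally show ?thesis .
qed

lemma l2norm_sq_eq_0_iff:
  assumes "sqint M f"
  shows "l2norm_sq M f = 0 \<longleftrightarrow> (AE x in M. f x = 0)"
  using integral_nonneg_eq_0_iff_AE[OF sqint_integrable_square[OF assms]]
  by (simp add: l2norm_sq_def)

lemma sqint_bounded:
  assumes "finite_measure M" and [measurable]: "f \<in> borel_measurable M" and bound: "\<And>x. cmod (f x) \<le> B"
  shows "sqint M f"
proof -
  have "integrable M (\<lambda>x. (cmod (f x))\<^sup>2)"
    using bound by (intro finite_measure.integrable_const_bound[OF assms(1), where B = "B\<^sup>2"])
      (auto intro!: AE_I2 power_mono)
  then show ?thesis
    by (simp add: sqint_def)
qed

lemma sqint_imp_integrable:
  assumes "finite_measure M" "sqint M f"
  shows "integrable M f"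
proof (rule Bochner_Integration.integrable_bound)
  show "integrable M (\<lambda>x. 1 + (cmod (f x))\<^sup>2)"
    by (rule Bochner_Integration.integrable_add[OF finite_measure.integrable_const[OF assms(1)]
          sqint_integrable_square[OF assms(2)]])
  show "f \<in> borel_measurable M"
    using assms(2) by (rule sqint_measurable)
  have "cmod z \<le> 1 + (cmod z)\<^sup>2" for z
    using sum_squares_ge_zero[of "cmod z - 1/2" 0] by (simp add: power2_eq_square algebra_simps)
  then show "AE x in M. norm (f x) \<le> norm (1 + (cmod (f x))\<^sup>2)"
    by simp
qed

lemma integral_cmod_squared_le_l2norm_sq:
  assumes "prob_space M" "sqint M f"
  shows "(\<integral>x. cmod (f x) \<partial>M)\<^sup>2 \<le> l2norm_sq M f"
proof -
  interpret prob_space M by fact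
  have "0 \<le> (\<integral>x. (cmod (f x) - (\<integral>x. cmod (f x) \<partial>M))\<^sup>2 \<partial>M)"
    by (rule integral_nonneg_AE) simp
  also have "\<dots> = l2norm_sq M f - (\<integral>x. cmod (f x) \<partial>M)\<^sup>2"
    using sqint_imp_integrable[OF finite_measure_axioms assms(2)] sqint_integrable_square[OF assms(2)]
    by (simp add: variance_eq l2norm_sq_def)
  finally show ?thesis
    by simp
qed

lemma ip_eq_cmult_l2norm_sq:
  assumes v: "sqint M v" and g: "g \<in> borel_measurable M" and eq: "AE x in M. g x = c * v x"
  shows "ip M v g = c * l2norm_sq M v"
proof -
  have [measurable]: "v \<in> borel_measurable M" "g \<in> borel_measurable M"
    using v g by (simp_all add: sqint_measurable)
  have cnj_mult: "cnj (v x) * (c * v x) = c * of_real ((cmod (v x))\<^sup>2)" for x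
    by (simp only: complex_norm_square mult_ac)
  have "ip M v g = (\<integral>x. c * of_real ((cmod (v x))\<^sup>2) \<partial>M)"
    unfolding ip_def
  proof (rule integral_cong_AE)
    show "AE x in M. cnj (v x) * g x = c * of_real ((cmod (v x))\<^sup>2)"
      using eq by eventually_elim (simp only: cnj_mult)
  qed measurable
  also have "\<dots> = c * l2norm_sq M v"
    by (simp add: integral_complex_of_real l2norm_sq_def del: of_real_power)
  finally show ?thesis .
qed

definition l2_tendsto :: "real measure \<Rightarrow> (nat \<Rightarrow> real \<Rightarrow> complex) \<Rightarrow> (real \<Rightarrow> complex) \<Rightarrow> bool" where
  "l2_tendsto M u f \<longleftrightarrow> (\<lambda>m. l2norm_sq M (\<lambda>x. u m x - f x)) \<longlonglongrightarrow> 0"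

lemma l2_tendstoI_bound:
  assumes "\<And>m. l2norm_sq M (\<lambda>x. u m x - f x) \<le> b m" and "b \<longlonglongrightarrow> 0"
  shows "l2_tendsto M u f"
  unfolding l2_tendsto_def
proof (rule tendsto_sandwich[of "\<lambda>_. 0" _ _ b])
  show "\<forall>\<^sub>F m in sequentially. 0 \<le> l2norm_sq M (\<lambda>x. u m x - f x)"
    by (intro always_eventually allI l2norm_sq_nonneg)
  show "\<forall>\<^sub>F m in sequentially. l2norm_sq M (\<lambda>x. u m x - f x) \<le> b m"
    by (intro always_eventually allI assms(1))
qed (simp_all add: assms(2))

lemma l2_tendsto_add:
  assumes "\<And>m. sqint M (u m)" "\<And>m. sqint M (v m)" "sqint M f" "sqint M g"
    and "l2_tendsto M u f" "l2_tendsto M v g"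
  shows "l2_tendsto M (\<lambda>m x. u m x + v m x) (\<lambda>x. f x + g x)"
proof (rule l2_tendstoI_bound)
  fix m
  show "l2norm_sq M (\<lambda>x. (u m x + v m x) - (f x + g x)) \<le>
      2 * l2norm_sq M (\<lambda>x. u m x - f x) + 2 * l2norm_sq M (\<lambda>x. v m x - g x)"
    using l2norm_sq_add_le[OF sqint_diff[OF assms(1,3)] sqint_diff[OF assms(2,4)]]
    by (simp add: algebra_simps)
  show "(\<lambda>m. 2 * l2norm_sq M (\<lambda>x. u m x - f x) + 2 * l2norm_sq M (\<lambda>x. v m x - g x)) \<longlonglongrightarrow> 0"
    using tendsto_add[OF tendsto_mult_right_zero tendsto_mult_right_zero, OF assms(5,6)[unfolded l2_tendsto_def]]
    by simp
qed

lemma l2_tendsto_cmult: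
  assumes "l2_tendsto M u f"
  shows "l2_tendsto M (\<lambda>m x. c * u m x) (\<lambda>x. c * f x)"
proof -
  have "l2norm_sq M (\<lambda>x. c * u m x - c * f x) = (cmod c)\<^sup>2 * l2norm_sq M (\<lambda>x. u m x - f x)" for m
    by (simp add: l2norm_sq_cmult flip: right_diff_distrib)
  then show ?thesis
    using tendsto_mult_right_zero[OF assms[unfolded l2_tendsto_def]] by (simp add: l2_tendsto_def)
qed

lemma l2_tendsto_cong_AE:
  assumes "\<And>m. sqint M (u m)" "\<And>m. sqint M (v m)" "sqint M f"
    and "\<And>m. AE x in M. u m x = v m x" and "l2_tendsto M u f"
  shows "l2_tendsto M v f"
proof -
  have "l2norm_sq M (\<lambda>x. u m x - f x) = l2norm_sq M (\<lambda>x. v m x - f x)" for m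
    using assms(4)[of m] sqint_diff[OF assms(1,3)] sqint_diff[OF assms(2,3)]
    by (intro l2norm_sq_cong_AE) (auto simp: sqint_measurable)
  then show ?thesis
    using assms(5) by (simp add: l2_tendsto_def)
qed

lemma l2_tendsto_unique:
  assumes "\<And>m. sqint M (u m)" "sqint M f" "sqint M g"
    and "l2_tendsto M u f" "l2_tendsto M u g"
  shows "AE x in M. f x = g x"
proof -
  have "l2norm_sq M (\<lambda>x. f x - g x) \<le>
      2 * l2norm_sq M (\<lambda>x. u m x - f x) + 2 * l2norm_sq M (\<lambda>x. u m x - g x)" for m
  proof -
    have "l2norm_sq M (\<lambda>x. (f x - u m x) + (u m x - g x)) \<le>
        2 * l2norm_sq M (\<lambda>x. f x - u m x) + 2 * l2norm_sq M (\<lambda>x. u m x - g x)"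
      by (rule l2norm_sq_add_le[OF sqint_diff[OF assms(2) assms(1)] sqint_diff[OF assms(1) assms(3)]])
    moreover have "(\<lambda>x. (f x - u m x) + (u m x - g x)) = (\<lambda>x. f x - g x)"
      by auto
    ultimately show ?thesis
      by (simp add: l2norm_sq_minus_commute[of M f])
  qed
  moreover have "(\<lambda>m. 2 * l2norm_sq M (\<lambda>x. u m x - f x) + 2 * l2norm_sq M (\<lambda>x. u m x - g x)) \<longlonglongrightarrow> 0"
    using tendsto_add[OF tendsto_mult_right_zero tendsto_mult_right_zero, OF assms(4,5)[unfolded l2_tendsto_def]]
    by simp
  ultimately have "l2norm_sq M (\<lambda>x. f x - g x) \<le> 0"
    by (intro tendsto_le[OF trivial_limit_sequentially _ tendsto_const]) auto
  then have "AE x in M. f x - g x = 0"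
    using l2norm_sq_nonneg l2norm_sq_eq_0_iff[OF sqint_diff[OF assms(2,3)]] by (metis order_antisym)
  then show ?thesis
    by eventually_elim simp
qed

section \<open>Bounded linear operators on \<open>L\<^sup>2\<close>\<close>

text \<open>
  Operators act on representatives rather than on equivalence classes, so additivity and
  homogeneity can only be required almost everywhere.
\<close>

locale bounded_ae_linear =
  fixes M :: "real measure" and T :: "(real \<Rightarrow> complex) \<Rightarrow> real \<Rightarrow> complex"
  assumes sqint_image: "sqint M g \<Longrightarrow> sqint M (T g)"
    and bounded: "\<exists>c. \<forall>g. sqint M g \<longrightarrow> l2norm M (T g) \<le> c * l2norm M g"
    and add_AE: "sqint M g \<Longrightarrow> sqint M h \<Longrightarrow> AE x in M. T (\<lambda>y. g y + h y) x = T g x + T h x"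
    and cmult_AE: "sqint M g \<Longrightarrow> AE x in M. T (\<lambda>y. a * g y) x = a * T g x"
begin

lemma bounded_l2norm_sq: "\<exists>C\<ge>0. \<forall>g. sqint M g \<longrightarrow> l2norm_sq M (T g) \<le> C * l2norm_sq M g"
proof -
  obtain c where c: "\<And>g. sqint M g \<Longrightarrow> l2norm M (T g) \<le> c * l2norm M g"
    using bounded by blast
  have "l2norm M (T g) \<le> max c 0 * l2norm M g" if "sqint M g" for g
    using c[OF that] by (smt (verit) l2norm_eq_sqrt mult_right_mono real_sqrt_ge_zero l2norm_sq_nonneg)
  then show ?thesis
    by (intro exI[of _ "(max c 0)\<^sup>2"]) (simp add: l2norm_le_iff_l2norm_sq_le)
qed

lemma measurable_image: "sqint M g \<Longrightarrow> T g \<in> borel_measurable M"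
  by (simp add: sqint_image sqint_measurable)

lemma zero_AE:
  assumes "sqint M g" "AE x in M. g x = 0"
  shows "AE x in M. T g x = 0"
proof -
  obtain C where "C \<ge> 0" and C: "l2norm_sq M (T g) \<le> C * l2norm_sq M g"
    using bounded_l2norm_sq assms(1) by blast
  moreover have "l2norm_sq M g = 0"
    using assms l2norm_sq_eq_0_iff by blast
  ultimately have "l2norm_sq M (T g) = 0"
    using l2norm_sq_nonneg[of M "T g"] by simp
  then show ?thesis
    using l2norm_sq_eq_0_iff[OF sqint_image[OF assms(1)]] by simp
qed

lemma cong_AE:
  assumes f: "sqint M f" and g: "sqint M g" and eq: "AE x in M. f x = g x"
  shows "AE x in M. T f x = T g x"
proof -
  have diff: "sqint M (\<lambda>x. f x - g x)"
    using f g by (rule sqint_diff)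
  have "AE x in M. T (\<lambda>x. f x - g x) x = 0"
    using eq by (intro zero_AE[OF diff]) auto
  moreover have "AE x in M. T (\<lambda>y. g y + (f y - g y)) x = T g x + T (\<lambda>x. f x - g x) x"
    by (rule add_AE[OF g diff])
  ultimately show ?thesis
    by eventually_elim simp
qed

lemma eigenvector_power:
  assumes v: "sqint M v" and eigen: "AE x in M. T v x = c * v x"
  shows "sqint M ((T ^^ n) v) \<and> (AE x in M. (T ^^ n) v x = c ^ n * v x)"
proof (induction n)
  case (Suc n)
  then have sqint_n: "sqint M ((T ^^ n) v)" and eigen_n: "AE x in M. (T ^^ n) v x = c ^ n * v x"
    by auto
  have "AE x in M. T ((T ^^ n) v) x = T (\<lambda>y. c ^ n * v y) x"
    by (rule cong_AE[OF sqint_n sqint_cmult[OF v] eigen_n])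
  moreover have "AE x in M. T (\<lambda>y. c ^ n * v y) x = c ^ n * T v x"
    by (rule cmult_AE[OF v])
  ultimately have "AE x in M. T ((T ^^ n) v) x = c ^ Suc n * v x"
    using eigen by eventually_elim simp
  then show ?case
    using sqint_image[OF sqint_n] by simp
qed (simp add: v)

lemma eigenvalue_bound:
  obtains B where "\<And>lam g. sqint M g \<Longrightarrow> (AE x in M. T g x = of_real lam * g x) \<Longrightarrow>
    l2norm_sq M g \<noteq> 0 \<Longrightarrow> \<bar>lam\<bar> \<le> B"
proof -
  obtain C where "C \<ge> 0" and C: "\<And>g. sqint M g \<Longrightarrow> l2norm_sq M (T g) \<le> C * l2norm_sq M g"
    using bounded_l2norm_sq by blast
  have "\<bar>lam\<bar> \<le> sqrt C"
    if g: "sqint M g" and eigen: "AE x in M. T g x = of_real lam * g x" and nonzero: "l2norm_sq M g \<noteq> 0"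
    for lam g
  proof -
    have "l2norm_sq M (T g) = l2norm_sq M (\<lambda>x. of_real lam * g x)"
      by (rule l2norm_sq_cong_AE[OF measurable_image[OF g] sqint_measurable[OF sqint_cmult[OF g]] eigen])
    also have "\<dots> = lam\<^sup>2 * l2norm_sq M g"
      by (simp add: l2norm_sq_cmult)
    finally have "lam\<^sup>2 * l2norm_sq M g \<le> C * l2norm_sq M g"
      using C[OF g] by simp
    then have "lam\<^sup>2 \<le> C"
      using nonzero l2norm_sq_nonneg[of M g] by (simp add: mult_le_cancel_right)
    then show ?thesis
      by (metis real_sqrt_abs real_sqrt_le_mono)
  qed
  then show ?thesis
    using that by blast
qed

end

lemma bounded_ae_linearI:
  assumes "\<And>g. sqint M g \<Longrightarrow> sqint M (T g)"
    and "\<And>g. sqint M g \<Longrightarrow> l2norm_sq M (T g) \<le> C * l2norm_sq M g"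
    and "\<And>g h. sqint M g \<Longrightarrow> sqint M h \<Longrightarrow> AE x in M. T (\<lambda>y. g y + h y) x = T g x + T h x"
    and "\<And>a g. sqint M g \<Longrightarrow> AE x in M. T (\<lambda>y. a * g y) x = a * T g x"
  shows "bounded_ae_linear M T"
proof
  have "l2norm M (T g) \<le> sqrt \<bar>C\<bar> * l2norm M g" if "sqint M g" for g
    using assms(2)[OF that] l2norm_sq_nonneg[of M g]
    by (simp add: l2norm_le_iff_l2norm_sq_le) (smt (verit) mult_right_mono)
  then show "\<exists>c. \<forall>g. sqint M g \<longrightarrow> l2norm M (T g) \<le> c * l2norm M g"
    by blast
qed (use assms in auto)

lemma bounded_ae_linear_id: "bounded_ae_linear M (\<lambda>g. g)"
  by (rule bounded_ae_linearI[where C = 1]) auto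

lemma bounded_ae_linear_compose:
  assumes "bounded_ae_linear M U" "bounded_ae_linear M T"
  shows "bounded_ae_linear M (\<lambda>g. U (T g))"
proof -
  interpret U: bounded_ae_linear M U by fact
  interpret T: bounded_ae_linear M T by fact
  obtain CU where "CU \<ge> 0" and CU: "\<And>g. sqint M g \<Longrightarrow> l2norm_sq M (U g) \<le> CU * l2norm_sq M g"
    using U.bounded_l2norm_sq by blast
  obtain CT where CT: "\<And>g. sqint M g \<Longrightarrow> l2norm_sq M (T g) \<le> CT * l2norm_sq M g"
    using T.bounded_l2norm_sq by blast
  show ?thesis
  proof (rule bounded_ae_linearI[where C = "CU * CT"])
    fix g assume g: "sqint M g"
    show "sqint M (U (T g))"
      by (intro U.sqint_image T.sqint_image g)
    show "l2norm_sq M (U (T g)) \<le> CU * CT * l2norm_sq M g"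
      using CU[OF T.sqint_image[OF g]] mult_left_mono[OF CT[OF g] \<open>CU \<ge> 0\<close>] by simp
    fix h assume h: "sqint M h"
    have "AE x in M. U (T (\<lambda>y. g y + h y)) x = U (\<lambda>y. T g y + T h y) x"
      by (intro U.cong_AE T.sqint_image sqint_add g h T.add_AE)
    moreover have "AE x in M. U (\<lambda>y. T g y + T h y) x = U (T g) x + U (T h) x"
      by (intro U.add_AE T.sqint_image g h)
    ultimately show "AE x in M. U (T (\<lambda>y. g y + h y)) x = U (T g) x + U (T h) x"
      by eventually_elim simp
  next
    fix a g assume g: "sqint M g"
    have "AE x in M. U (T (\<lambda>y. a * g y)) x = U (\<lambda>y. a * T g y) x"
      by (intro U.cong_AE T.sqint_image sqint_cmult g T.cmult_AE)
    moreover have "AE x in M. U (\<lambda>y. a * T g y) x = a * U (T g) x"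
      by (intro U.cmult_AE T.sqint_image g)
    ultimately show "AE x in M. U (T (\<lambda>y. a * g y)) x = a * U (T g) x"
      by eventually_elim simp
  qed
qed

lemma bounded_ae_linear_add:
  assumes "bounded_ae_linear M U" "bounded_ae_linear M T"
  shows "bounded_ae_linear M (\<lambda>g x. U g x + T g x)"
proof -
  interpret U: bounded_ae_linear M U by fact
  interpret T: bounded_ae_linear M T by fact
  obtain CU where CU: "\<And>g. sqint M g \<Longrightarrow> l2norm_sq M (U g) \<le> CU * l2norm_sq M g"
    using U.bounded_l2norm_sq by blast
  obtain CT where CT: "\<And>g. sqint M g \<Longrightarrow> l2norm_sq M (T g) \<le> CT * l2norm_sq M g"
    using T.bounded_l2norm_sq by blast
  show ?thesis
  proof (rule bounded_ae_linearI[where C = "2 * CU + 2 * CT"])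
    fix g assume g: "sqint M g"
    show "sqint M (\<lambda>x. U g x + T g x)"
      by (intro sqint_add U.sqint_image T.sqint_image g)
    show "l2norm_sq M (\<lambda>x. U g x + T g x) \<le> (2 * CU + 2 * CT) * l2norm_sq M g"
      using l2norm_sq_add_le[OF U.sqint_image[OF g] T.sqint_image[OF g]] CU[OF g] CT[OF g]
      by (simp add: algebra_simps)
    fix h assume h: "sqint M h"
    show "AE x in M. U (\<lambda>y. g y + h y) x + T (\<lambda>y. g y + h y) x = (U g x + T g x) + (U h x + T h x)"
      using U.add_AE[OF g h] T.add_AE[OF g h] by eventually_elim simp
  next
    fix a g assume g: "sqint M g"
    show "AE x in M. U (\<lambda>y. a * g y) x + T (\<lambda>y. a * g y) x = a * (U g x + T g x)"
      using U.cmult_AE[where a = a, OF g] T.cmult_AE[where a = a, OF g] by eventually_elim (simp add: distrib_left)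
  qed
qed

lemma bounded_ae_linear_cmult:
  assumes "bounded_ae_linear M T"
  shows "bounded_ae_linear M (\<lambda>g x. c * T g x)"
proof -
  interpret T: bounded_ae_linear M T by fact
  obtain C where C: "\<And>g. sqint M g \<Longrightarrow> l2norm_sq M (T g) \<le> C * l2norm_sq M g"
    using T.bounded_l2norm_sq by blast
  show ?thesis
  proof (rule bounded_ae_linearI[where C = "(cmod c)\<^sup>2 * C"])
    fix g assume g: "sqint M g"
    show "sqint M (\<lambda>x. c * T g x)"
      by (intro sqint_cmult T.sqint_image g)
    show "l2norm_sq M (\<lambda>x. c * T g x) \<le> (cmod c)\<^sup>2 * C * l2norm_sq M g"
      using mult_left_mono[OF C[OF g], of "(cmod c)\<^sup>2"] by (simp add: l2norm_sq_cmult)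
    fix h assume h: "sqint M h"
    show "AE x in M. c * T (\<lambda>y. g y + h y) x = c * T g x + c * T h x"
      using T.add_AE[OF g h] by eventually_elim (simp add: distrib_left)
  next
    fix a g assume g: "sqint M g"
    show "AE x in M. c * T (\<lambda>y. a * g y) x = a * (c * T g x)"
      using T.cmult_AE[where a = a, OF g] by eventually_elim simp
  qed
qed

definition op_norm_tendsto :: "real measure \<Rightarrow> (nat \<Rightarrow> (real \<Rightarrow> complex) \<Rightarrow> real \<Rightarrow> complex)
    \<Rightarrow> ((real \<Rightarrow> complex) \<Rightarrow> real \<Rightarrow> complex) \<Rightarrow> bool" where
  "op_norm_tendsto M A K \<longleftrightarrow> (\<forall>e>0. \<exists>N. \<forall>m\<ge>N. \<forall>f. sqint M f \<longrightarrow>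
     l2norm M (\<lambda>x. A m f x - K f x) \<le> e * l2norm M f)"

lemma op_norm_tendstoD:
  assumes "op_norm_tendsto M A K" "e > 0"
  obtains N where "\<And>m f. N \<le> m \<Longrightarrow> sqint M f \<Longrightarrow>
    l2norm_sq M (\<lambda>x. A m f x - K f x) \<le> e\<^sup>2 * l2norm_sq M f"
  using assms l2norm_le_iff_l2norm_sq_le[of e] unfolding op_norm_tendsto_def by force

lemma op_norm_tendsto_imp_l2_tendsto:
  assumes lim: "op_norm_tendsto M A K" and f: "sqint M f"
  shows "l2_tendsto M (\<lambda>m. A m f) (K f)"
  unfolding l2_tendsto_def
proof (rule LIMSEQ_I)
  fix r :: real assume r: "0 < r"
  define e where "e = sqrt (r / (l2norm_sq M f + 1))"
  have f_nonneg: "0 \<le> l2norm_sq M f"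
    by (rule l2norm_sq_nonneg)
  then have "e > 0"
    using r by (simp add: e_def add_nonneg_pos)
  then obtain N where N: "\<And>m. N \<le> m \<Longrightarrow> l2norm_sq M (\<lambda>x. A m f x - K f x) \<le> e\<^sup>2 * l2norm_sq M f"
    using op_norm_tendstoD[OF lim] f by metis
  have "e\<^sup>2 * l2norm_sq M f = r * (l2norm_sq M f / (l2norm_sq M f + 1))"
    using r f_nonneg by (simp add: e_def)
  also have "\<dots> < r"
    using r f_nonneg by (simp add: divide_less_eq)
  finally show "\<exists>N. \<forall>m\<ge>N. norm (l2norm_sq M (\<lambda>x. A m f x - K f x) - 0) < r"
    using N l2norm_sq_nonneg by (metis abs_of_nonneg diff_zero order_le_less_trans real_norm_def)
qed

lemma op_norm_tendsto_bounded:
  assumes A: "\<And>m. bounded_ae_linear M (A m)" and K: "\<And>f. sqint M f \<Longrightarrow> sqint M (K f)"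
    and lim: "op_norm_tendsto M A K"
  obtains C where "\<And>f. sqint M f \<Longrightarrow> l2norm_sq M (K f) \<le> C * l2norm_sq M f"
proof -
  obtain N where N: "\<And>m f. N \<le> m \<Longrightarrow> sqint M f \<Longrightarrow> l2norm_sq M (\<lambda>x. A m f x - K f x) \<le> 1\<^sup>2 * l2norm_sq M f"
    using op_norm_tendstoD[OF lim, of 1] by auto
  obtain C where C: "\<And>f. sqint M f \<Longrightarrow> l2norm_sq M (A N f) \<le> C * l2norm_sq M f"
    using bounded_ae_linear.bounded_l2norm_sq[OF A[of N]] by blast
  have "l2norm_sq M (K f) \<le> (2 + 2 * C) * l2norm_sq M f" if f: "sqint M f" for f
  proof -
    have sqint_A: "sqint M (A N f)"
      by (rule bounded_ae_linear.sqint_image[OF A[of N] f])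
    have "l2norm_sq M (K f) = l2norm_sq M (\<lambda>x. (K f x - A N f x) + A N f x)"
      by simp
    also have "\<dots> \<le> 2 * l2norm_sq M (\<lambda>x. K f x - A N f x) + 2 * l2norm_sq M (A N f)"
      by (rule l2norm_sq_add_le[OF sqint_diff[OF K[OF f] sqint_A] sqint_A])
    also have "\<dots> \<le> 2 * l2norm_sq M f + 2 * (C * l2norm_sq M f)"
      using N[OF order_refl f] C[OF f] by (simp add: l2norm_sq_minus_commute[of M "K f"])
    finally show ?thesis
      by (simp add: algebra_simps)
  qed
  then show thesis
    by (rule that)
qed

lemma op_norm_limit_add_AE:
  assumes A: "\<And>m. bounded_ae_linear M (A m)" and K: "\<And>f. sqint M f \<Longrightarrow> sqint M (K f)"
    and lim: "op_norm_tendsto M A K" and g: "sqint M g" and h: "sqint M h"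
  shows "AE x in M. K (\<lambda>y. g y + h y) x = K g x + K h x"
proof -
  have sqint_A: "\<And>m f. sqint M f \<Longrightarrow> sqint M (A m f)"
    using bounded_ae_linear.sqint_image[OF A] .
  have sum: "l2_tendsto M (\<lambda>m x. A m g x + A m h x) (\<lambda>x. K g x + K h x)"
    by (rule l2_tendsto_add) (simp_all add: sqint_A K g h op_norm_tendsto_imp_l2_tendsto[OF lim])
  have "AE x in M. A m g x + A m h x = A m (\<lambda>y. g y + h y) x" for m
    using bounded_ae_linear.add_AE[OF A[of m] g h] by eventually_elim simp
  then have "l2_tendsto M (\<lambda>m. A m (\<lambda>y. g y + h y)) (\<lambda>x. K g x + K h x)"
    by (rule l2_tendsto_cong_AE[OF sqint_add[OF sqint_A[OF g] sqint_A[OF h]]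
          sqint_A[OF sqint_add[OF g h]] sqint_add[OF K[OF g] K[OF h]] _ sum])
  moreover have "l2_tendsto M (\<lambda>m. A m (\<lambda>y. g y + h y)) (K (\<lambda>y. g y + h y))"
    by (rule op_norm_tendsto_imp_l2_tendsto[OF lim sqint_add[OF g h]])
  ultimately show ?thesis
    by (intro l2_tendsto_unique[OF sqint_A[OF sqint_add[OF g h]] K[OF sqint_add[OF g h]]
          sqint_add[OF K[OF g] K[OF h]]])
qed

lemma op_norm_limit_cmult_AE:
  assumes A: "\<And>m. bounded_ae_linear M (A m)" and K: "\<And>f. sqint M f \<Longrightarrow> sqint M (K f)"
    and lim: "op_norm_tendsto M A K" and g: "sqint M g"
  shows "AE x in M. K (\<lambda>y. a * g y) x = a * K g x"
proof -
  have sqint_A: "\<And>m f. sqint M f \<Longrightarrow> sqint M (A m f)"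
    using bounded_ae_linear.sqint_image[OF A] .
  have scaled: "l2_tendsto M (\<lambda>m x. a * A m g x) (\<lambda>x. a * K g x)"
    by (rule l2_tendsto_cmult[OF op_norm_tendsto_imp_l2_tendsto[OF lim g]])
  have "AE x in M. a * A m g x = A m (\<lambda>y. a * g y) x" for m
    using bounded_ae_linear.cmult_AE[where a = a, OF A[of m] g] by eventually_elim simp
  then have "l2_tendsto M (\<lambda>m. A m (\<lambda>y. a * g y)) (\<lambda>x. a * K g x)"
    by (rule l2_tendsto_cong_AE[OF sqint_cmult[OF sqint_A[OF g]] sqint_A[OF sqint_cmult[OF g]]
          sqint_cmult[OF K[OF g]] _ scaled])
  moreover have "l2_tendsto M (\<lambda>m. A m (\<lambda>y. a * g y)) (K (\<lambda>y. a * g y))"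
    by (rule op_norm_tendsto_imp_l2_tendsto[OF lim sqint_cmult[OF g]])
  ultimately show ?thesis
    by (intro l2_tendsto_unique[OF sqint_A[OF sqint_cmult[OF g]] K[OF sqint_cmult[OF g]]
          sqint_cmult[OF K[OF g]]])
qed

lemma bounded_ae_linear_op_norm_limit:
  assumes A: "\<And>m. bounded_ae_linear M (A m)" and K: "\<And>f. sqint M f \<Longrightarrow> sqint M (K f)"
    and lim: "op_norm_tendsto M A K"
  shows "bounded_ae_linear M K"
proof -
  obtain C where "\<And>f. sqint M f \<Longrightarrow> l2norm_sq M (K f) \<le> C * l2norm_sq M f"
    using op_norm_tendsto_bounded[OF A K lim] by blast
  then show ?thesis
    using op_norm_limit_add_AE[OF A K lim] op_norm_limit_cmult_AE[OF A K lim]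
    by (intro bounded_ae_linearI[OF K]) auto
qed

section \<open>Functional calculus and spectral measures of eigenvectors\<close>

lemma is_fcalc_iff:
  "is_fcalc M K f T \<longleftrightarrow> bounded_ae_linear M T \<and>
     (\<forall>lam g. sqint M g \<longrightarrow> (AE x in M. K g x = of_real lam * g x) \<longrightarrow>
        (AE x in M. T g x = f lam * g x))"
  unfolding is_fcalc_def bounded_ae_linear_def by blast

text \<open>
  The truncation makes the symbol bounded without changing it on the eigenvalues, which
  are bounded by the norm of the operator.
\<close>

definition clamped_square :: "real \<Rightarrow> real \<Rightarrow> real \<Rightarrow> real" where
  "clamped_square R c t = (max (-R) (min R t) - c)\<^sup>2"

lemma clamped_square_measurable [measurable]: "clamped_square R c \<in> borel_measurable borel"
  unfolding clamped_square_def by measurable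

lemma clamped_square_nonneg: "0 \<le> clamped_square R c t"
  by (simp add: clamped_square_def)

lemma clamped_square_le: "\<bar>c\<bar> < R \<Longrightarrow> clamped_square R c t \<le> (R + \<bar>c\<bar>)\<^sup>2"
  unfolding clamped_square_def by (intro power2_le_iff_abs_le[THEN iffD2]) (auto simp: max_def min_def)

lemma clamped_square_eq: "\<bar>t\<bar> \<le> R \<Longrightarrow> clamped_square R c t = (t - c)\<^sup>2"
  by (simp add: clamped_square_def)

lemma clamped_square_eq_0_iff: "\<bar>c\<bar> < R \<Longrightarrow> clamped_square R c t = 0 \<longleftrightarrow> t = c"
  by (auto simp: clamped_square_def max_def min_def split: if_splits)

lemma is_fcalc_shifted_square:
  assumes K: "bounded_ae_linear M K"
  obtains R where "R > \<bar>c\<bar>" and "is_fcalc M K (\<lambda>t. of_real (clamped_square R c t))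
    (\<lambda>g x. (K (K g) x + of_real (-2 * c) * K g x) + of_real (c\<^sup>2) * g x)"
proof -
  interpret K: bounded_ae_linear M K by fact
  obtain B where B: "\<And>lam g. sqint M g \<Longrightarrow> (AE x in M. K g x = of_real lam * g x) \<Longrightarrow>
      l2norm_sq M g \<noteq> 0 \<Longrightarrow> \<bar>lam\<bar> \<le> B"
    using K.eigenvalue_bound by blast
  define R where "R = \<bar>B\<bar> + \<bar>c\<bar> + 1"
  let ?T = "\<lambda>g x. (K (K g) x + of_real (-2 * c) * K g x) + of_real (c\<^sup>2) * g x"
  have T: "bounded_ae_linear M ?T"
    by (rule bounded_ae_linear_add[OF bounded_ae_linear_add[OF bounded_ae_linear_compose[OF K K]
          bounded_ae_linear_cmult[OF K]] bounded_ae_linear_cmult[OF bounded_ae_linear_id]])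
  have "AE x in M. ?T g x = of_real (clamped_square R c lam) * g x"
    if g: "sqint M g" and eigen: "AE x in M. K g x = of_real lam * g x" for lam g
  \<comment> \<open>A null function satisfies every eigenvalue equation, hence the case split.\<close>
  proof (cases "l2norm_sq M g = 0")
    case True
    then have "AE x in M. g x = 0"
      using l2norm_sq_eq_0_iff[OF g] by simp
    moreover from this have "AE x in M. ?T g x = 0"
      by (rule bounded_ae_linear.zero_AE[OF T g])
    ultimately show ?thesis
      by eventually_elim simp
  next
    case False
    then have clamp: "clamped_square R c lam = (lam - c)\<^sup>2"
      using B[OF g eigen] unfolding R_def by (intro clamped_square_eq) auto
    have "AE x in M. K (K g) x = of_real lam * (of_real lam * g x)"
      using K.cong_AE[OF K.sqint_image[OF g] sqint_cmult[OF g] eigen] K.cmult_AE[OF g] eigen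
      by eventually_elim simp
    then show ?thesis
      using eigen by eventually_elim (simp add: clamp power2_eq_square algebra_simps)
  qed
  moreover have "R > \<bar>c\<bar>"
    by (simp add: R_def)
  ultimately show ?thesis
    using T that by (simp add: is_fcalc_iff)
qed

lemma is_spectral_measure_return:
  assumes v: "sqint M v" and norm: "l2norm_sq M v = 1"
    and eigen: "AE x in M. K v x = of_real lam * v x"
  shows "is_spectral_measure M K v (return borel lam)"
  unfolding is_spectral_measure_def
proof (intro conjI allI impI)
  show "finite_measure (return borel lam)"
    by (simp add: prob_space_return prob_space.finite_measure)
  fix f T assume "f \<in> borel_measurable borel \<and> bounded (range f) \<and> is_fcalc M K f T"
  then have f: "f \<in> borel_measurable borel" and T: "bounded_ae_linear M T"
    and "AE x in M. T v x = f lam * v x"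
    using v eigen by (auto simp: is_fcalc_iff)
  then have "ip M v (T v) = f lam"
    using ip_eq_cmult_l2norm_sq[OF v] bounded_ae_linear.measurable_image[OF T v] norm by simp
  also have "\<dots> = (\<integral>t. f t \<partial>return borel lam)"
    using f by (simp add: integral_return)
  finally show "ip M v (T v) = (\<integral>t. f t \<partial>return borel lam)" .
qed simp

lemma eq_return_borelI:
  fixes nu :: "real measure" and g :: "real \<Rightarrow> real"
  assumes nu: "prob_space nu" "sets nu = sets borel"
    and g: "g \<in> borel_measurable borel" "\<And>t. 0 \<le> g t" "\<And>t. g t \<le> B"
    and zero: "\<And>t. g t = 0 \<Longrightarrow> t = a" "(\<integral>t. g t \<partial>nu) = 0"
  shows "nu = return borel a"
proof -
  interpret prob_space nu by fact
  have space: "space nu = UNIV"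
    using sets_eq_imp_space_eq[OF nu(2)] by simp
  have "g \<in> borel_measurable nu"
    using g(1) by (simp add: measurable_cong_sets[OF nu(2) refl])
  moreover have "AE t in nu. norm (g t) \<le> B"
    using g(2,3) by (intro AE_I2) (simp add: abs_of_nonneg)
  ultimately have "integrable nu g"
    by (intro integrable_const_bound)
  then have "AE t in nu. g t = 0"
    using integral_nonneg_eq_0_iff_AE[where M = nu and f = g] g(2) zero(2) by simp
  then have ae: "AE t in nu. t = a"
    by eventually_elim (rule zero(1))
  show ?thesis
  proof (rule measure_eqI)
    fix A assume A: "A \<in> sets nu"
    have "measure nu A = (\<integral>t. indicator A t \<partial>nu)"
      by (simp add: space)
    also have "\<dots> = (\<integral>t. indicator A a \<partial>nu)"
      using A ae by (intro integral_cong_AE) auto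
    also have "\<dots> = indicator A a"
      by (simp add: prob_space)
    finally show "emeasure nu A = emeasure (return borel a) A"
      using A nu(2) by (simp add: emeasure_eq_measure ennreal_indicator)
  qed (simp add: nu(2))
qed

lemma spectral_measure_prob_space:
  assumes spec: "is_spectral_measure M K v nu" and v: "sqint M v" and norm: "l2norm_sq M v = 1"
  shows "prob_space nu"
proof -
  have spectral: "\<And>f T. f \<in> borel_measurable borel \<Longrightarrow> bounded (range f) \<Longrightarrow> is_fcalc M K f T \<Longrightarrow>
      ip M v (T v) = (\<integral>t. f t \<partial>nu)"
    and "finite_measure nu"
    using spec by (auto simp: is_spectral_measure_def)
  interpret finite_measure nu by fact
  have "is_fcalc M K (\<lambda>_. 1) (\<lambda>g. g)"
    by (simp add: is_fcalc_iff bounded_ae_linear_id)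
  then have "ip M v v = of_real (measure nu (space nu))"
    using spectral[of "\<lambda>_. 1" "\<lambda>g. g"] by (simp add: scaleR_conv_of_real)
  moreover have "ip M v v = 1"
    using ip_eq_cmult_l2norm_sq[OF v, of v 1] sqint_measurable[OF v] norm by simp
  ultimately have "measure nu (space nu) = 1"
    by (metis of_real_eq_1_iff)
  then show ?thesis
    by (intro prob_spaceI) (simp add: emeasure_eq_measure)
qed

lemma spectral_measure_eq_return:
  assumes K: "bounded_ae_linear M K" and spec: "is_spectral_measure M K v nu"
    and v: "sqint M v" and norm: "l2norm_sq M v = 1"
    and eigen: "AE x in M. K v x = of_real lam * v x"
  shows "nu = return borel lam"
proof -
  have spectral: "\<And>f T. f \<in> borel_measurable borel \<Longrightarrow> bounded (range f) \<Longrightarrow> is_fcalc M K f T \<Longrightarrow>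
      ip M v (T v) = (\<integral>t. f t \<partial>nu)"
    using spec by (auto simp: is_spectral_measure_def)
  obtain R T where R: "R > \<bar>lam\<bar>" and T: "is_fcalc M K (\<lambda>t. of_real (clamped_square R lam t)) T"
    using is_fcalc_shifted_square[OF K] by blast
  have "bounded (range (\<lambda>t. complex_of_real (clamped_square R lam t)))"
    unfolding bounded_iff using clamped_square_le[OF R] clamped_square_nonneg
    by (intro exI[of _ "(R + \<bar>lam\<bar>)\<^sup>2"]) auto
  then have "ip M v (T v) = (\<integral>t. of_real (clamped_square R lam t) \<partial>nu)"
    by (intro spectral T) auto
  moreover have "ip M v (T v) = 0"
  proof -
    have "AE x in M. T v x = of_real (clamped_square R lam lam) * v x"
      using T v eigen unfolding is_fcalc_iff by blast
    moreover have "clamped_square R lam lam = 0"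
      using clamped_square_eq_0_iff[OF R] by simp
    ultimately have "AE x in M. T v x = 0 * v x"
      by simp
    moreover have "T v \<in> borel_measurable M"
      using T v by (meson is_fcalc_iff bounded_ae_linear.measurable_image)
    ultimately show ?thesis
      using ip_eq_cmult_l2norm_sq[OF v, of "T v" 0] by simp
  qed
  ultimately have "(\<integral>t. clamped_square R lam t \<partial>nu) = 0"
    by (simp add: integral_complex_of_real del: of_real_power)
  then show ?thesis
    using spectral_measure_prob_space[OF spec v norm] spec clamped_square_nonneg
      clamped_square_le[OF R] clamped_square_eq_0_iff[OF R]
    by (intro eq_return_borelI[where g = "clamped_square R lam" and B = "(R + \<bar>lam\<bar>)\<^sup>2"])
      (auto simp: is_spectral_measure_def)
qed

lemma spectral_measure_of_eigenvector:
  assumes K: "bounded_ae_linear M K" and v: "sqint M v" and norm: "l2norm_sq M v = 1"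
    and eigen: "AE x in M. K v x = of_real lam * v x"
  shows "is_spectral_measure M K v nu \<longleftrightarrow> nu = return borel lam"
  using spectral_measure_eq_return[OF K _ v norm eigen] is_spectral_measure_return[where K = K, OF v norm eigen]
  by blast

section \<open>The operators \<open>K\<^sub>m\<close> on the Cantor measure\<close>

context cantor_measure_space
begin

lemma ip_indicator_Cw_phi: "u \<in> words \<Longrightarrow> ip M (indicator (Cw u)) phi = (1/2) ^ length u"
proof -
  assume u: "u \<in> words"
  have "cnj (indicator (Cw u) x) * phi x = of_real (indicator (Cw u) x)" for x
    using Cw_subset_cantor[OF u] by (auto simp: phi_def indicator_def)
  then have "ip M (indicator (Cw u)) phi = of_real (measure M (Cw u))"
    by (simp add: ip_def integral_complex_of_real)
  then show ?thesis
    by (simp add: measure_Cw[OF u])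
qed

lemma Kop_phi: "Kop M m phi x = (\<Sum>n\<le>m. (1/2) ^ n * indicator (cylinders n) x)"
proof -
  have "Kop M m phi x = (\<Sum>u\<in>words_upto m. (1/2) ^ length u * indicator (Cw u) x)"
    unfolding Kop_def
    by (intro sum.cong) (auto simp: ip_indicator_Cw_phi words_upto_def)
  also have "\<dots> = (\<Sum>n\<le>m. \<Sum>u\<in>words_of_length n. (1/2) ^ length u * indicator (Cw u) x)"
    unfolding words_upto_eq_UN
    by (intro sum.UNION_disjoint finite_atMost finite_words_of_length ballI impI)
      (auto simp: words_of_length_def)
  also have "\<dots> = (\<Sum>n\<le>m. (1/2) ^ n * indicator (cylinders n) x)"
    by (simp add: indicator_cylinders sum_distrib_left words_of_length_def)
  finally show ?thesis .
qed

lemma AE_Kop_phi: "AE x in M. Kop M m phi x = (2 - (1/2) ^ m) * phi x"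
proof -
  have geometric: "(\<Sum>n\<le>m. (1/2::complex) ^ n) = 2 - (1/2) ^ m"
  proof (induction m)
    case (Suc m)
    then show ?case
      by (simp only: sum.atMost_Suc Suc.IH) (simp add: field_simps)
  qed simp
  have "AE x in M. x \<in> cantor \<and> (\<forall>n. x \<in> cylinders n)"
    by (simp add: AE_all_countable AE_in_cantor AE_in_cylinders)
  then show ?thesis
    by eventually_elim (simp add: Kop_phi geometric, simp add: phi_def)
qed


lemma sqint_phi: "sqint M phi"
  unfolding phi_def by (rule sqint_bounded[OF finite_measure_axioms, of _ 1]) (auto simp: indicator_def)

lemma l2norm_sq_phi: "l2norm_sq M phi = 1"
proof -
  have "(\<lambda>x. (cmod (phi x))\<^sup>2) = indicator cantor"
    by (simp add: phi_def fun_eq_iff split: split_indicator)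
  then have "l2norm_sq M phi = measure M cantor"
    by (simp add: l2norm_sq_def)
  then show ?thesis
    by (simp add: measure_cantor)
qed

lemma integrable_cnj_indicator_mult:
  assumes A: "A \<in> sets borel" and h: "sqint M h"
  shows "integrable M (\<lambda>x. cnj (indicator A x) * h x)"
proof (rule Bochner_Integration.integrable_bound[OF sqint_imp_integrable[OF finite_measure_axioms h]])
  have [measurable]: "h \<in> borel_measurable M" "A \<in> sets M"
    using h A by (simp_all add: sqint_measurable sets_M)
  show "(\<lambda>x. cnj (indicator A x) * h x) \<in> borel_measurable M"
    by measurable
  show "AE x in M. cmod (cnj (indicator A x) * h x) \<le> cmod (h x)"
    by (intro AE_I2) (simp add: indicator_def norm_mult)
qed

lemma ip_indicator_add:
  assumes "A \<in> sets borel" "sqint M f" "sqint M g"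
  shows "ip M (indicator A) (\<lambda>x. f x + g x) = ip M (indicator A) f + ip M (indicator A) g"
  using integrable_cnj_indicator_mult[OF assms(1,2)] integrable_cnj_indicator_mult[OF assms(1,3)]
  by (simp add: ip_def distrib_left)

lemma ip_indicator_cmult: "ip M (indicator A) (\<lambda>x. a * f x) = a * ip M (indicator A) f"
  by (simp add: ip_def mult.left_commute)

lemma norm_ip_indicator_le:
  assumes "A \<in> sets borel" "sqint M f"
  shows "cmod (ip M (indicator A) f) \<le> (\<integral>x. cmod (f x) \<partial>M)"
proof -
  have "cmod (ip M (indicator A) f) \<le> (\<integral>x. cmod (cnj (indicator A x) * f x) \<partial>M)"
    unfolding ip_def by (rule integral_norm_bound)
  also have "\<dots> \<le> (\<integral>x. cmod (f x) \<partial>M)"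
    by (rule integral_mono[OF integrable_norm[OF integrable_cnj_indicator_mult[OF assms]]
          integrable_norm[OF sqint_imp_integrable[OF finite_measure_axioms assms(2)]]])
      (simp add: indicator_def norm_mult)
  finally show ?thesis .
qed

lemma Kop_measurable: "Kop M m f \<in> borel_measurable M"
  unfolding Kop_def by measurable

lemma Kop_add: "sqint M f \<Longrightarrow> sqint M g \<Longrightarrow> Kop M m (\<lambda>x. f x + g x) x = Kop M m f x + Kop M m g x"
  by (simp add: Kop_def ip_indicator_add distrib_right sum.distrib)

lemma Kop_cmult: "Kop M m (\<lambda>x. a * f x) x = a * Kop M m f x"
  by (simp add: Kop_def ip_indicator_cmult sum_distrib_left mult.assoc)

lemma norm_Kop_le:
  assumes "sqint M f"
  shows "cmod (Kop M m f x) \<le> card (words_upto m) * (\<integral>x. cmod (f x) \<partial>M)"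
proof -
  have "cmod (Kop M m f x) \<le> (\<Sum>u\<in>words_upto m. cmod (ip M (indicator (Cw u)) f * indicator (Cw u) x))"
    unfolding Kop_def by (rule norm_sum)
  also have "\<dots> \<le> (\<Sum>u\<in>words_upto m. \<integral>x. cmod (f x) \<partial>M)"
  proof (rule sum_mono)
    fix u
    have "cmod (ip M (indicator (Cw u)) f * indicator (Cw u) x) \<le> cmod (ip M (indicator (Cw u)) f)"
      by (simp add: norm_mult indicator_def)
    then show "cmod (ip M (indicator (Cw u)) f * indicator (Cw u) x) \<le> (\<integral>x. cmod (f x) \<partial>M)"
      using norm_ip_indicator_le[OF Cw_in_borel[of u] assms] by linarith
  qed
  finally show ?thesis
    by simp
qed

lemma bounded_ae_linear_Kop: "bounded_ae_linear M (Kop M m)"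
proof (rule bounded_ae_linearI[where C = "(card (words_upto m))\<^sup>2"])
  fix f assume f: "sqint M f"
  show "sqint M (Kop M m f)"
    by (rule sqint_bounded[OF finite_measure_axioms Kop_measurable norm_Kop_le[OF f]])
  have "l2norm_sq M (Kop M m f) \<le> (\<integral>x. (card (words_upto m) * (\<integral>x. cmod (f x) \<partial>M))\<^sup>2 \<partial>M)"
    unfolding l2norm_sq_def
    using sqint_integrable_square[OF \<open>sqint M (Kop M m f)\<close>] norm_Kop_le[OF f]
    by (intro integral_mono) (auto intro!: power_mono)
  also have "\<dots> = (card (words_upto m))\<^sup>2 * (\<integral>x. cmod (f x) \<partial>M)\<^sup>2"
    using prob_space by (simp add: power_mult_distrib)
  also have "\<dots> \<le> (card (words_upto m))\<^sup>2 * l2norm_sq M f"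
    by (intro mult_left_mono integral_cmod_squared_le_l2norm_sq[OF prob_space_axioms f]) simp
  finally show "l2norm_sq M (Kop M m f) \<le> (card (words_upto m))\<^sup>2 * l2norm_sq M f" .
qed (simp_all add: Kop_add Kop_cmult)

lemma AE_K_phi:
  assumes K: "\<And>f. sqint M f \<Longrightarrow> sqint M (K f)" and lim: "op_norm_tendsto M (Kop M) K"
  shows "AE x in M. K phi x = 2 * phi x"
proof -
  have sqint_Kop: "sqint M (Kop M m phi)" for m
    by (rule bounded_ae_linear.sqint_image[OF bounded_ae_linear_Kop sqint_phi])
  have "l2_tendsto M (\<lambda>m. Kop M m phi) (\<lambda>x. 2 * phi x)"
  proof (rule l2_tendstoI_bound)
    fix m
    have "AE x in M. Kop M m phi x - 2 * phi x = - ((1/2) ^ m) * phi x"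
      using AE_Kop_phi[of m] by eventually_elim (simp add: algebra_simps)
    then have "l2norm_sq M (\<lambda>x. Kop M m phi x - 2 * phi x) = l2norm_sq M (\<lambda>x. - ((1/2) ^ m) * phi x)"
      by (rule l2norm_sq_cong_AE[OF sqint_measurable[OF sqint_diff[OF sqint_Kop sqint_cmult[OF sqint_phi]]]
            sqint_measurable[OF sqint_cmult[OF sqint_phi]]])
    also have "\<dots> = ((1/2) ^ m)\<^sup>2"
      by (simp only: l2norm_sq_cmult l2norm_sq_phi) (simp add: norm_power)
    finally show "l2norm_sq M (\<lambda>x. Kop M m phi x - 2 * phi x) \<le> ((1/2) ^ m)\<^sup>2"
      by simp
    show "(\<lambda>m. ((1/2::real) ^ m)\<^sup>2) \<longlonglongrightarrow> 0"
      using tendsto_power[OF LIMSEQ_realpow_zero[of "1/2"], of 2] by simp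
  qed
  moreover have "l2_tendsto M (\<lambda>m. Kop M m phi) (K phi)"
    by (rule op_norm_tendsto_imp_l2_tendsto[OF lim sqint_phi])
  ultimately show ?thesis
    by (intro l2_tendsto_unique[OF sqint_Kop K[OF sqint_phi] sqint_cmult[OF sqint_phi]])
qed

end

theorem corollary7p5:
  fixes M :: "real measure"
    and K :: "(real \<Rightarrow> complex) \<Rightarrow> (real \<Rightarrow> complex)"
  assumes "cantor_measure M"
    and "is_Kinf M K"
  shows "(AE x in M. K phi x = 2 * phi x) \<and>
         (\<forall>n::nat. ip M phi ((K ^^ n) phi) = 2 ^ n) \<and>
         (\<forall>nu. is_spectral_measure M K phi nu \<longleftrightarrow> nu = return borel (2::real))"
proof -
  interpret cantor_measure_space M
    by unfold_locales (rule assms(1))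
  have sqint_K: "\<And>f. sqint M f \<Longrightarrow> sqint M (K f)" and lim: "op_norm_tendsto M (Kop M) K"
    using assms(2) by (auto simp: is_Kinf_def op_norm_tendsto_def)
  have K: "bounded_ae_linear M K"
    by (rule bounded_ae_linear_op_norm_limit[OF bounded_ae_linear_Kop sqint_K lim])
  have eigen: "AE x in M. K phi x = of_real 2 * phi x"
    using AE_K_phi[OF sqint_K lim] by simp
  have "ip M phi ((K ^^ n) phi) = 2 ^ n" for n
  proof -
    have "sqint M ((K ^^ n) phi)" "AE x in M. (K ^^ n) phi x = (of_real 2) ^ n * phi x"
      using bounded_ae_linear.eigenvector_power[OF K sqint_phi eigen] by auto
    then show ?thesis
      using ip_eq_cmult_l2norm_sq[OF sqint_phi] l2norm_sq_phi by (simp add: sqint_measurable)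
  qed
  moreover have "is_spectral_measure M K phi nu \<longleftrightarrow> nu = return borel 2" for nu
    by (rule spectral_measure_of_eigenvector[OF K sqint_phi l2norm_sq_phi eigen])
  ultimately show ?thesis
    using eigen by simp
qed

end
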